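(* Let $\rho$ be a type-I elliptic isometry of $\mathbb{H}^4$ with twisting plane $P$. Then a plane $Q$ of $\mathbb{H}^4$ is orthogonal to $P$ through a line (i.e. $Q\cap P$ is a line and $Q$ meets $P$ orthogonally along it) if and only if $\partial Q\in\mathcal{K}_\rho$.
   Context: A type-I elliptic isometry of $\mathbb{H}^4$ is a composition of reflections in two distinct hyperplanes meeting in a plane; its fixed-point set, a plane, is its twisting plane $P$. The permuted pencil $\mathcal{F}_\rho$ is the set of boundaries at infinity of hyperplanes containing $P$. The invariant pencil $\mathcal{T}_\rho$ is the set of boundaries of hyperplanes orthogonal to $P$. The half-turn bank is $\mathcal{K}_\rho=\{s\cap t: s\in\mathcal{F}_\rho,\ t\in\mathcal{T}_\rho\}$, a set of subsets of $\partial\mathbb{H}^4$. *)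

theory Defs
  imports "HOL-Analysis.Analysis"
begin

text \<open>Hyperboloid model of hyperbolic 4-space in Minkowski space R^{4,1}, realised as
  real^5 with coordinate 0 timelike.\<close>

definition mink :: "real^5 \<Rightarrow> real^5 \<Rightarrow> real" where
  "mink x y = inner x y - 2 * (x $ 0) * (y $ 0)"

definition hyp :: "(real^5) set" where
  "hyp = {x. mink x x = -1 \<and> x $ 0 > 0}"

definition tg_subspace :: "nat \<Rightarrow> (real^5) set \<Rightarrow> bool" where
  "tg_subspace k S \<longleftrightarrow> (\<exists>V. subspace V \<and> dim V = k + 1 \<and> S = hyp \<inter> V) \<and> S \<noteq> {}"

abbreviation hline :: "(real^5) set \<Rightarrow> bool" where "hline \<equiv> tg_subspace 1"
abbreviation hplane :: "(real^5) set \<Rightarrow> bool" where "hplane \<equiv> tg_subspace 2"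
abbreviation hhyperplane :: "(real^5) set \<Rightarrow> bool" where "hhyperplane \<equiv> tg_subspace 3"

text \<open>Boundary at infinity: via radial projection to the Klein model (affine chart x0 = 1);
  the sphere at infinity is the null set in that chart.\<close>
definition ideal_sphere :: "(real^5) set" where
  "ideal_sphere = {y. y $ 0 = 1 \<and> mink y y = 0}"

definition klein_proj :: "real^5 \<Rightarrow> real^5" where
  "klein_proj x = (1 / (x $ 0)) *\<^sub>R x"

definition bd :: "(real^5) set \<Rightarrow> (real^5) set" where
  "bd S = closure (klein_proj ` S) \<inter> ideal_sphere"

text \<open>Reflection in a hyperplane H (Minkowski normal vector, well defined up to scaling).\<close>
definition normal_of :: "(real^5) set \<Rightarrow> real^5" where
  "normal_of H = (SOME n. n \<noteq> 0 \<and> (\<forall>v\<in>span H. mink n v = 0))"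

definition hrefl :: "(real^5) set \<Rightarrow> real^5 \<Rightarrow> real^5" where
  "hrefl H x = (let n = normal_of H in x - (2 * mink x n / mink n n) *\<^sub>R n)"

definition type_I_elliptic :: "(real^5 \<Rightarrow> real^5) \<Rightarrow> bool" where
  "type_I_elliptic \<rho> \<longleftrightarrow>
     (\<exists>H1 H2. hhyperplane H1 \<and> hhyperplane H2 \<and> H1 \<noteq> H2 \<and> hplane (H1 \<inter> H2) \<and>
        (\<forall>x\<in>hyp. \<rho> x = hrefl H1 (hrefl H2 x)))"

definition twisting_plane :: "(real^5 \<Rightarrow> real^5) \<Rightarrow> (real^5) set" where
  "twisting_plane \<rho> = {x \<in> hyp. \<rho> x = x}"

definition orth_hyperplane_plane :: "(real^5) set \<Rightarrow> (real^5) set \<Rightarrow> bool" where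
  "orth_hyperplane_plane t P \<longleftrightarrow> hhyperplane t \<and> hplane P \<and>
     (\<forall>n. (\<forall>v\<in>span t. mink n v = 0) \<longrightarrow> n \<in> span P)"

definition permuted_pencil :: "(real^5 \<Rightarrow> real^5) \<Rightarrow> (real^5) set set" where
  "permuted_pencil \<rho> = {bd s | s. hhyperplane s \<and> twisting_plane \<rho> \<subseteq> s}"

definition invariant_pencil :: "(real^5 \<Rightarrow> real^5) \<Rightarrow> (real^5) set set" where
  "invariant_pencil \<rho> = {bd t | t. orth_hyperplane_plane t (twisting_plane \<rho>)}"

definition half_turn_bank :: "(real^5 \<Rightarrow> real^5) \<Rightarrow> (real^5) set set" where
  "half_turn_bank \<rho> = {s \<inter> t | s t. s \<in> permuted_pencil \<rho> \<and> t \<in> invariant_pencil \<rho>}"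

definition orth_through_line :: "(real^5) set \<Rightarrow> (real^5) set \<Rightarrow> bool" where
  "orth_through_line Q P \<longleftrightarrow> hline (Q \<inter> P) \<and>
     (\<forall>u\<in>span Q. \<forall>v\<in>span P. (\<forall>w\<in>span (Q \<inter> P). mink u w = 0) \<longrightarrow>
         (\<forall>w\<in>span (Q \<inter> P). mink v w = 0) \<longrightarrow> mink u v = 0)"

end

theory Submission
  imports Defs
begin

text \<open>In the hyperboloid model a totally geodesic k-subspace of H^4 is the trace on hyp of a
  (k+1)-dimensional linear subspace of Minkowski space, and its boundary consists of the null
  rays of that subspace, which span it back. Hence the boundary of Q is the intersection of the
  boundaries of s and t exactly when span Q = span s \<inter> span t. The twisting plane P is the
  intersection of the two mirrors, and a hyperplane is orthogonal to P iff its (spacelike)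
  Minkowski normal n lies in span P.

  If Q meets P orthogonally along a line, choose n in span P orthogonal to that line: then Q
  lies in the hyperplane t orthogonal to n, and span Q = (span Q + span P) \<inter> span t.
  Conversely, if span Q = span s \<inter> span t with P inside s and n is the normal of t, then
  Q \<inter> P is the section of P by the orthogonal complement of n, a line, and every vector of P orthogonal to that line is a
  multiple of n, hence orthogonal to Q.\<close>

section \<open>Minkowski orthogonality\<close>

text \<open>Flipping the time coordinate turns Minkowski orthogonality into Euclidean orthogonality,
  which transfers the dimension count for orthogonal complements.\<close>
definition time_flip :: "real^5 \<Rightarrow> real^5" where
  "time_flip x = x - (2 * x $ 0) *\<^sub>R axis 0 1"

lemma mink_eq_inner_time_flip: "mink x y = inner (time_flip x) y"
  unfolding mink_def time_flip_def by (simp add: inner_diff_left inner_axis' algebra_simps)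

lemma time_flip_time_flip [simp]: "time_flip (time_flip x) = x"
  unfolding time_flip_def by (vector axis_def)

lemma linear_time_flip: "linear time_flip"
  unfolding time_flip_def by (intro linearI) (auto simp: algebra_simps)

lemma mink_commute: "mink x y = mink y x"
  unfolding mink_def by (simp add: inner_commute)

lemma mink_add_left: "mink (x + y) z = mink x z + mink y z"
  unfolding mink_def by (simp add: inner_add_left algebra_simps)
lemma mink_add_right: "mink z (x + y) = mink z x + mink z y"
  unfolding mink_def by (simp add: inner_add_right algebra_simps)
lemma mink_diff_left: "mink (x - y) z = mink x z - mink y z"
  unfolding mink_def by (simp add: inner_diff_left algebra_simps)
lemma mink_diff_right: "mink z (x - y) = mink z x - mink z y"
  unfolding mink_def by (simp add: inner_diff_right algebra_simps)
lemma mink_scaleR_left: "mink (c *\<^sub>R x) z = c * mink x z"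
  unfolding mink_def by (simp add: algebra_simps)
lemma mink_scaleR_right: "mink z (c *\<^sub>R x) = c * mink z x"
  unfolding mink_def by (simp add: algebra_simps)
lemma mink_minus_left: "mink (- x) z = - mink x z"
  unfolding mink_def by (simp add: algebra_simps)
lemma mink_minus_right: "mink z (- x) = - mink z x"
  unfolding mink_def by (simp add: algebra_simps)
lemma mink_zero [simp]: "mink 0 z = 0" "mink z 0 = 0"
  unfolding mink_def by auto

lemmas mink_simps = mink_add_left mink_add_right mink_diff_left mink_diff_right
  mink_scaleR_left mink_scaleR_right mink_minus_left mink_minus_right

definition mink_orth :: "(real^5) set \<Rightarrow> (real^5) set" where
  "mink_orth V = {x. \<forall>v\<in>V. mink x v = 0}"

lemma mem_mink_orth_singleton [simp]: "x \<in> mink_orth {n} \<longleftrightarrow> mink x n = 0"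
  unfolding mink_orth_def by simp

lemma subspace_mink_orth: "subspace (mink_orth V)"
  unfolding subspace_def mink_orth_def by (auto simp: mink_simps)

lemma mink_orth_span: "mink_orth (span S) = mink_orth S"
proof
  show "mink_orth (span S) \<subseteq> mink_orth S"
    unfolding mink_orth_def using span_superset by blast
  show "mink_orth S \<subseteq> mink_orth (span S)"
  proof
    fix x assume x: "x \<in> mink_orth S"
    have "subspace (mink_orth {x})" by (rule subspace_mink_orth)
    moreover have "S \<subseteq> mink_orth {x}" using x by (auto simp: mink_orth_def mink_commute)
    ultimately have "span S \<subseteq> mink_orth {x}" by (rule span_minimal[rotated])
    then show "x \<in> mink_orth (span S)" by (auto simp: mink_orth_def mink_commute)
  qed
qed

lemma dim_mink_orth:
  assumes "subspace V"
  shows "dim (mink_orth V) + dim V = 5"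
proof -
  have "x \<in> mink_orth V \<longleftrightarrow> time_flip x \<in> orthogonal_comp V" for x
    unfolding mink_orth_def orthogonal_comp_def orthogonal_def
    by (auto simp: mink_eq_inner_time_flip inner_commute)
  then have "mink_orth V = time_flip ` orthogonal_comp V"
    by (auto simp: image_iff) (metis time_flip_time_flip)
  moreover have "dim (time_flip ` orthogonal_comp V) = dim (orthogonal_comp V)"
    by (rule dim_image_eq[OF linear_time_flip]) (metis time_flip_time_flip inj_on_inverseI)
  moreover have "orthogonal_comp V = {y \<in> UNIV. \<forall>x\<in>V. orthogonal x y}"
    by (auto simp: orthogonal_comp_def orthogonal_commute)
  ultimately show ?thesis
    using dim_subspace_orthogonal_to_vectors[OF assms subspace_UNIV] by simp
qed

lemma mink_orth_mink_orth:
  assumes "subspace V"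
  shows "mink_orth (mink_orth V) = V"
proof (rule sym, rule subspace_dim_equal[OF assms subspace_mink_orth])
  show "V \<subseteq> mink_orth (mink_orth V)" by (auto simp: mink_orth_def mink_commute)
  show "dim (mink_orth (mink_orth V)) \<le> dim V"
    using dim_mink_orth[OF assms] dim_mink_orth[OF subspace_mink_orth, of V] by simp
qed

lemma mink_orth_mink_orth_singleton: "mink_orth (mink_orth {n}) = span {n}"
proof -
  have "subspace (span {n})" by (rule subspace_span)
  then have "mink_orth (mink_orth (span {n})) = span {n}" by (rule mink_orth_mink_orth)
  then show ?thesis unfolding mink_orth_span .
qed

lemma dim_mink_orth_singleton: "n \<noteq> 0 \<Longrightarrow> dim (mink_orth {n}) = 4"
  using dim_mink_orth[of "span {n}"] by (simp add: mink_orth_span)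

lemma dim_Int_ge:
  assumes "subspace A" "subspace (B :: (real^5) set)"
  shows "dim A + dim B \<le> dim (A \<inter> B) + 5"
  using dim_sums_Int[OF assms] dim_subset_UNIV_cart[of "{x + y |x y. x \<in> A \<and> y \<in> B}"]
  by simp

lemma dim_Int_less:
  fixes A B :: "(real^5) set"
  assumes "subspace A" "subspace B" "x \<in> A" "x \<notin> B"
  shows "dim (A \<inter> B) < dim A"
proof (rule dim_psubset)
  have "span (A \<inter> B) = A \<inter> B" using assms by (simp add: span_eq_iff subspace_inter)
  moreover have "span A = A" using assms by (simp add: span_eq_iff)
  ultimately show "span (A \<inter> B) \<subset> span A" using assms by blast
qed

lemma dim_ge_1_obtain_nonzero:
  fixes A :: "(real^5) set"
  assumes "1 \<le> dim A"
  obtains x where "x \<in> A" "x \<noteq> 0"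
proof -
  have "\<not> A \<subseteq> {0}" using assms dim_eq_0[of A] by linarith
  then show thesis using that by blast
qed

lemma subspace_eq_Int_if_codim_one:
  fixes A B C :: "(real^5) set"
  assumes "subspace A" "subspace B" "subspace C" "A \<subseteq> B \<inter> C" "dim B \<le> dim A + 1"
    and "x \<in> B" "x \<notin> C"
  shows "A = B \<inter> C"
  using subspace_dim_equal[OF assms(1) subspace_inter[OF assms(2,3)] assms(4)]
    dim_Int_less[OF assms(2,3,6,7)] assms(5) by linarith

section \<open>Timelike and spacelike vectors\<close>

lemma hyp_mink_self: "p \<in> hyp \<Longrightarrow> mink p p = -1"
  unfolding hyp_def by simp

lemma mink_self_eq_norm_power2: "x $ 0 = 0 \<Longrightarrow> mink x x = norm x ^ 2"
  unfolding mink_def by (simp add: power2_norm_eq_inner)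

lemma timelike_time_component_nonzero: "mink w w < 0 \<Longrightarrow> w $ 0 \<noteq> 0"
  using mink_self_eq_norm_power2[of w] by force

text \<open>Eliminating the time component between w and x gives a purely spatial vector of
  non-positive square, hence zero.\<close>
lemma mink_orth_timelike_imp_spacelike:
  assumes "mink w w < 0" "mink w x = 0" "x \<noteq> 0"
  shows "mink x x > 0"
proof (rule ccontr)
  assume "\<not> mink x x > 0"
  define z where "z = (x $ 0) *\<^sub>R w - (w $ 0) *\<^sub>R x"
  have "mink z z = (x$0)^2 * mink w w - 2 * (x$0) * (w$0) * mink w x + (w$0)^2 * mink x x"
    unfolding z_def by (simp add: mink_simps mink_commute[of x w] power2_eq_square algebra_simps)
  also have "\<dots> \<le> 0"
    using assms \<open>\<not> mink x x > 0\<close> by (simp add: add_nonpos_nonpos mult_nonneg_nonpos)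
  finally have "mink z z \<le> 0" .
  moreover have "z $ 0 = 0" unfolding z_def by simp
  ultimately have "z = 0" using mink_self_eq_norm_power2[of z] by simp
  then have eq: "(w $ 0) *\<^sub>R x = (x $ 0) *\<^sub>R w" unfolding z_def by simp
  have "w $ 0 \<noteq> 0" by (rule timelike_time_component_nonzero[OF assms(1)])
  then have "x = (1 / w $ 0) *\<^sub>R ((w $ 0) *\<^sub>R x)" by simp
  also have "\<dots> = (x $ 0 / w $ 0) *\<^sub>R w" unfolding eq by simp
  finally have x_eq: "x = (x $ 0 / w $ 0) *\<^sub>R w" .
  have "mink w x = (x $ 0 / w $ 0) * mink w w" by (subst x_eq) (simp add: mink_simps)
  then have "x $ 0 = 0" using assms timelike_time_component_nonzero[OF assms(1)] by simp
  then show False using x_eq assms(3) by simp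
qed

lemma mink_orth_Int_self_subset:
  assumes "p \<in> L" "mink p p < 0"
  shows "L \<inter> mink_orth L \<subseteq> {0}"
proof
  fix x assume x: "x \<in> L \<inter> mink_orth L"
  then have "mink x x = 0" "mink p x = 0"
    using assms(1) by (auto simp: mink_orth_def mink_commute)
  then show "x \<in> {0}" using mink_orth_timelike_imp_spacelike[OF assms(2)] by fastforce
qed

lemma timelike_scaleR_in_hyp:
  assumes "mink x x < 0"
  obtains c where "c \<noteq> 0" "c *\<^sub>R x \<in> hyp"
proof -
  define c where "c = sgn (x $ 0) / sqrt (- mink x x)"
  have "x $ 0 \<noteq> 0" using timelike_time_component_nonzero[OF assms] .
  then have "c \<noteq> 0" "(c *\<^sub>R x) $ 0 > 0"
    using assms by (auto simp: c_def sgn_if divide_simps)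
  moreover have "c^2 = 1 / (- mink x x)"
    using assms \<open>x $ 0 \<noteq> 0\<close> by (simp add: c_def power_divide sgn_if)
  then have "mink (c *\<^sub>R x) (c *\<^sub>R x) = -1"
    using assms by (simp add: mink_simps power2_eq_square field_simps)
  ultimately show thesis using that unfolding hyp_def by blast
qed

lemma mink_orth_projection:
  assumes "mink n n \<noteq> 0"
  shows "mink (x - (mink x n / mink n n) *\<^sub>R n) n = 0"
  using assms by (simp add: mink_simps)

lemma timelike_projection:
  assumes "mink p p < 0" "mink n n > 0"
  shows "mink (p - (mink p n / mink n n) *\<^sub>R n) (p - (mink p n / mink n n) *\<^sub>R n) < 0"
proof -
  have "mink (p - (mink p n / mink n n) *\<^sub>R n) (p - (mink p n / mink n n) *\<^sub>R n)
      = mink p p - (mink p n)^2 / mink n n"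
    using assms by (simp add: mink_simps mink_commute[of n p] power2_eq_square field_simps)
  also have "\<dots> < 0" using assms by (smt (verit) divide_nonneg_pos zero_le_power2)
  finally show ?thesis .
qed

section \<open>Spans of hyperbolic and ideal points\<close>

lemma timelike_in_span_hyp_Int:
  assumes "subspace V" "x \<in> V" "mink x x < 0"
  shows "x \<in> span (hyp \<inter> V)"
proof -
  obtain c where "c \<noteq> 0" "c *\<^sub>R x \<in> hyp" using timelike_scaleR_in_hyp[OF assms(3)] .
  moreover have "c *\<^sub>R x \<in> V" using assms by (simp add: subspace_scale)
  ultimately have "(1 / c) *\<^sub>R (c *\<^sub>R x) \<in> span (hyp \<inter> V)" by (intro span_mul span_base) auto
  then show ?thesis using \<open>c \<noteq> 0\<close> by simp
qed

text \<open>Every vector v of V is a difference quotient of p + s v and p, where p \<in> hyp \<inter> V and s is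
  so small that p + s v is still timelike.\<close>
lemma span_hyp_Int:
  assumes "subspace V" "p \<in> hyp \<inter> V"
  shows "span (hyp \<inter> V) = V"
proof
  show "span (hyp \<inter> V) \<subseteq> V" using assms(1) by (simp add: span_minimal)
  show "V \<subseteq> span (hyp \<inter> V)"
  proof
    fix v assume v: "v \<in> V"
    define s where "s = 1 / (2 * \<bar>mink p v\<bar> + \<bar>mink v v\<bar> + 1)"
    have s: "0 < s" "s \<le> 1" unfolding s_def by (auto simp: divide_simps)
    have "\<bar>2 * s * mink p v + s^2 * mink v v\<bar> \<le> s * (2 * \<bar>mink p v\<bar> + \<bar>mink v v\<bar>)"
    proof -
      have "s^2 * \<bar>mink v v\<bar> \<le> s * \<bar>mink v v\<bar>"
        using s by (simp add: power2_eq_square mult_right_mono)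
      then show ?thesis
        using s abs_triangle_ineq[of "2 * s * mink p v" "s^2 * mink v v"]
        by (simp add: abs_mult algebra_simps)
    qed
    also have "\<dots> < 1" unfolding s_def by (simp add: field_simps)
    finally have small: "\<bar>2 * s * mink p v + s^2 * mink v v\<bar> < 1" .
    have "mink (p + s *\<^sub>R v) (p + s *\<^sub>R v) = -1 + (2 * s * mink p v + s^2 * mink v v)"
      using hyp_mink_self[of p] assms(2)
      by (simp add: mink_simps mink_commute[of v p] power2_eq_square algebra_simps)
    with small have "mink (p + s *\<^sub>R v) (p + s *\<^sub>R v) < 0" by linarith
    moreover have "p + s *\<^sub>R v \<in> V" using assms v by (simp add: subspace_add subspace_scale)
    ultimately have "p + s *\<^sub>R v \<in> span (hyp \<inter> V)"
      using timelike_in_span_hyp_Int[OF assms(1)] by blast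
    moreover have "p \<in> span (hyp \<inter> V)" using assms(2) by (intro span_base)
    ultimately have "(1 / s) *\<^sub>R ((p + s *\<^sub>R v) - p) \<in> span (hyp \<inter> V)"
      by (intro span_mul span_diff)
    then show "v \<in> span (hyp \<inter> V)" using s by simp
  qed
qed

lemma null_in_span_ideal_sphere_Int:
  assumes "subspace W" "z \<in> W" "mink z z = 0" "z \<noteq> 0"
  shows "z \<in> span (W \<inter> ideal_sphere)"
proof -
  have "z $ 0 \<noteq> 0" using mink_self_eq_norm_power2[of z] assms(3,4) by auto
  then have "(1 / z $ 0) *\<^sub>R z \<in> W \<inter> ideal_sphere"
    using assms unfolding ideal_sphere_def by (simp add: subspace_scale mink_simps)
  then have "z $ 0 *\<^sub>R ((1 / z $ 0) *\<^sub>R z) \<in> span (W \<inter> ideal_sphere)" by (intro span_mul span_base)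
  then show ?thesis using \<open>z $ 0 \<noteq> 0\<close> by simp
qed

lemma quadratic_formula_root:
  fixes a b c r :: real
  assumes "a \<noteq> 0" "r^2 = b^2 - a * c"
  shows "c + 2 * ((r - b) / a) * b + ((r - b) / a)^2 * a = 0"
proof -
  have "a * (c + 2 * ((r - b) / a) * b + ((r - b) / a)^2 * a) = a * c + 2 * (r - b) * b + (r - b)^2"
    using assms(1) by (simp add: field_simps power2_eq_square)
  also have "\<dots> = 0" using assms(2) by (simp add: power2_eq_square algebra_simps)
  finally show ?thesis using assms(1) by simp
qed

text \<open>The line through a timelike p in the direction of a spacelike v meets the light cone in
  two points p + s v, and their difference is a nonzero multiple of v.\<close>
lemma timelike_spacelike_in_span_ideal_sphere_Int:
  assumes W: "subspace W" and p: "p \<in> W" "mink p p < 0" and v: "v \<in> W" "mink v v > 0"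
  shows "v \<in> span (W \<inter> ideal_sphere)" "p \<in> span (W \<inter> ideal_sphere)"
proof -
  define r where "r = sqrt ((mink p v)^2 - mink v v * mink p p)"
  have disc: "(mink p v)^2 - mink v v * mink p p > 0"
    using p v by (smt (verit) mult_pos_neg zero_le_power2)
  then have "r > 0" "r^2 = (mink p v)^2 - mink v v * mink p p" "(- r)^2 = (mink p v)^2 - mink v v * mink p p"
    unfolding r_def by simp_all
  have null: "p + s *\<^sub>R v \<in> span (W \<inter> ideal_sphere)"
    if s: "mink p p + 2 * s * mink p v + s^2 * mink v v = 0" for s
  proof (rule null_in_span_ideal_sphere_Int[OF W])
    show "p + s *\<^sub>R v \<in> W" using W p v by (simp add: subspace_add subspace_scale)
    show "mink (p + s *\<^sub>R v) (p + s *\<^sub>R v) = 0"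
      using s by (simp add: mink_simps mink_commute[of v p] power2_eq_square algebra_simps)
    show "p + s *\<^sub>R v \<noteq> 0"
    proof
      assume "p + s *\<^sub>R v = 0"
      then have "p = (- s) *\<^sub>R v" by (simp add: eq_neg_iff_add_eq_0 add.commute)
      then have "mink p p = s^2 * mink v v" by (simp add: mink_simps power2_eq_square)
      then show False using p v by (smt (verit) zero_le_power2 mult_nonneg_nonneg)
    qed
  qed
  define s1 s2 where "s1 = (r - mink p v) / mink v v" and "s2 = (- r - mink p v) / mink v v"
  have vv: "mink v v \<noteq> 0" using v by simp
  have null1: "p + s1 *\<^sub>R v \<in> span (W \<inter> ideal_sphere)"
    using null quadratic_formula_root[OF vv \<open>r^2 = _\<close>] unfolding s1_def by blast
  have null2: "p + s2 *\<^sub>R v \<in> span (W \<inter> ideal_sphere)"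
    using null quadratic_formula_root[OF vv \<open>(- r)^2 = _\<close>] unfolding s2_def by blast
  have "s1 - s2 \<noteq> 0" using \<open>r > 0\<close> vv unfolding s1_def s2_def by (simp add: divide_simps)
  moreover have "(1 / (s1 - s2)) *\<^sub>R ((p + s1 *\<^sub>R v) - (p + s2 *\<^sub>R v)) \<in> span (W \<inter> ideal_sphere)"
    using null1 null2 by (intro span_mul span_diff)
  ultimately show v_span: "v \<in> span (W \<inter> ideal_sphere)"
    by (simp add: algebra_simps flip: scaleR_diff_left)
  have "(p + s1 *\<^sub>R v) - s1 *\<^sub>R v \<in> span (W \<inter> ideal_sphere)"
    using null1 v_span by (intro span_diff span_mul)
  then show "p \<in> span (W \<inter> ideal_sphere)" by simp
qed

lemma span_ideal_sphere_Int:
  assumes W: "subspace W" and p: "p \<in> W" "mink p p < 0"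
    and u: "u \<in> W" "u \<noteq> 0" "mink p u = 0"
  shows "span (W \<inter> ideal_sphere) = W"
proof
  show "span (W \<inter> ideal_sphere) \<subseteq> W" using W by (simp add: span_minimal)
  have "p \<in> span (W \<inter> ideal_sphere)"
    using timelike_spacelike_in_span_ideal_sphere_Int(2)[OF W p u(1)]
      mink_orth_timelike_imp_spacelike[OF p(2) u(3,2)] .
  show "W \<subseteq> span (W \<inter> ideal_sphere)"
  proof
    fix v assume v: "v \<in> W"
    define w where "w = v - (mink v p / mink p p) *\<^sub>R p"
    have "w \<in> W" unfolding w_def using W v p by (simp add: subspace_diff subspace_scale)
    have "mink p w = 0" unfolding w_def using p by (simp add: mink_simps mink_commute[of p v])
    have "w \<in> span (W \<inter> ideal_sphere)"
    proof (cases "w = 0")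
      case False
      then have "mink w w > 0"
        using mink_orth_timelike_imp_spacelike[OF p(2) \<open>mink p w = 0\<close>] by blast
      then show ?thesis using timelike_spacelike_in_span_ideal_sphere_Int(1)[OF W p \<open>w \<in> W\<close>] by blast
    qed (simp add: span_zero)
    then have "w + (mink v p / mink p p) *\<^sub>R p \<in> span (W \<inter> ideal_sphere)"
      using \<open>p \<in> span (W \<inter> ideal_sphere)\<close> by (intro span_add span_mul)
    then show "v \<in> span (W \<inter> ideal_sphere)" unfolding w_def by simp
  qed
qed

lemma ideal_point_mink_timelike_neg:
  assumes "y \<in> ideal_sphere" "q $ 0 = 1" "mink q q < 0"
  shows "mink y q < 0"
proof -
  define spatial :: "real^5 \<Rightarrow> real^5" where "spatial x = x - (x $ 0) *\<^sub>R axis 0 1" for x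
  have mink_spatial: "mink x z = inner (spatial x) (spatial z) - x $ 0 * z $ 0" for x z
    unfolding mink_def spatial_def
    by (simp add: inner_diff_left inner_diff_right inner_axis inner_axis' inner_commute algebra_simps)
  have "y $ 0 = 1" "mink y y = 0" using assms(1) unfolding ideal_sphere_def by auto
  then have "norm (spatial y) = 1"
    using mink_spatial[of y y] by (simp add: norm_eq_1)
  moreover have "norm (spatial q) ^ 2 < 1"
    using mink_spatial[of q q] assms(2,3) by (simp add: power2_norm_eq_inner)
  then have "norm (spatial q) < 1" by (metis abs_of_nonneg abs_square_less_1 norm_ge_zero)
  moreover have "inner (spatial y) (spatial q) \<le> norm (spatial y) * norm (spatial q)"
    by (rule norm_cauchy_schwarz)
  ultimately show ?thesis using mink_spatial[of y q] \<open>y $ 0 = 1\<close> assms(2) by simp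
qed

text \<open>An ideal point y of V is the endpoint of the segment joining it to the Klein image q of
  a point of hyp \<inter> V; the open segment consists of timelike points of the chart.\<close>
lemma bd_hyp_Int:
  assumes V: "subspace V" and p: "p \<in> hyp \<inter> V"
  shows "bd (hyp \<inter> V) = V \<inter> ideal_sphere"
proof
  have "klein_proj ` (hyp \<inter> V) \<subseteq> V"
    unfolding klein_proj_def using V by (auto simp: subspace_scale)
  then have "closure (klein_proj ` (hyp \<inter> V)) \<subseteq> V"
    using closed_subspace[OF V] by (simp add: closure_minimal)
  then show "bd (hyp \<inter> V) \<subseteq> V \<inter> ideal_sphere" unfolding bd_def by auto
next
  show "V \<inter> ideal_sphere \<subseteq> bd (hyp \<inter> V)"
  proof
    fix y assume y: "y \<in> V \<inter> ideal_sphere"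
    then have "y $ 0 = 1" "mink y y = 0" unfolding ideal_sphere_def by auto
    define q where "q = klein_proj p"
    have "p $ 0 > 0" "mink p p = -1" using p unfolding hyp_def by auto
    then have q: "q $ 0 = 1" "mink q q < 0" "q \<in> V"
      using p V unfolding q_def klein_proj_def by (auto simp: mink_simps subspace_scale)
    have "mink y q < 0" using ideal_point_mink_timelike_neg y q(1,2) by blast
    have "open_segment y q \<subseteq> klein_proj ` (hyp \<inter> V)"
    proof
      fix z assume "z \<in> open_segment y q"
      then obtain t where t: "0 < t" "t < 1" and z: "z = (1 - t) *\<^sub>R y + t *\<^sub>R q"
        by (auto simp: in_segment)
      have "mink z z = 2 * t * (1 - t) * mink y q + t^2 * mink q q"
        unfolding z using \<open>mink y y = 0\<close>
        by (simp add: mink_simps mink_commute[of q y] power2_eq_square algebra_simps)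
      also have "\<dots> < 0"
      proof -
        have "2 * t * (1 - t) * mink y q \<le> 0" using t \<open>mink y q < 0\<close> by (simp add: mult_nonneg_nonpos)
        moreover have "t^2 * mink q q < 0" using t q(2) by (simp add: mult_pos_neg)
        ultimately show ?thesis by linarith
      qed
      finally obtain c where c: "c \<noteq> 0" "c *\<^sub>R z \<in> hyp" by (rule timelike_scaleR_in_hyp)
      have "z $ 0 = 1" unfolding z using \<open>y $ 0 = 1\<close> q(1) by (simp add: algebra_simps)
      then have "klein_proj (c *\<^sub>R z) = z" unfolding klein_proj_def using c by simp
      moreover have "c *\<^sub>R z \<in> V" unfolding z using V y q(3) by (simp add: subspace_add subspace_scale)
      ultimately show "z \<in> klein_proj ` (hyp \<inter> V)" using c by (metis IntI image_eqI)
    qed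
    moreover have "y \<noteq> q" using \<open>mink y y = 0\<close> q(2) by auto
    ultimately have "closed_segment y q \<subseteq> closure (klein_proj ` (hyp \<inter> V))"
      by (metis closure_mono closure_open_segment)
    then show "y \<in> bd (hyp \<inter> V)" unfolding bd_def using y by auto
  qed
qed

section \<open>Totally geodesic subspaces and hyperplanes\<close>

lemma tg_subspaceD:
  assumes "tg_subspace k S"
  shows "subspace (span S)" "dim (span S) = k + 1" "S = hyp \<inter> span S" "S \<noteq> {}"
proof -
  obtain V where V: "subspace V" "dim V = k + 1" "S = hyp \<inter> V" and "S \<noteq> {}"
    using assms unfolding tg_subspace_def by blast
  then have "span S = V" using span_hyp_Int[OF V(1)] by auto
  then show "subspace (span S)" "dim (span S) = k + 1" "S = hyp \<inter> span S" "S \<noteq> {}"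
    using V \<open>S \<noteq> {}\<close> by auto
qed

lemma tg_subspaceI:
  assumes "subspace V" "dim V = k + 1" "p \<in> hyp \<inter> V"
  shows "tg_subspace k (hyp \<inter> V)"
  using assms unfolding tg_subspace_def by blast

lemma bd_tg_subspace: "tg_subspace k S \<Longrightarrow> bd S = span S \<inter> ideal_sphere"
  using tg_subspaceD[of k S] bd_hyp_Int[of "span S"] by (metis ex_in_conv)

lemma span_bd_tg_subspace:
  assumes "tg_subspace k S" "1 \<le> k"
  shows "span (bd S) = span S"
proof -
  note S = tg_subspaceD[OF assms(1)]
  obtain p where p: "p \<in> hyp" "p \<in> span S" using S(3,4) by blast
  have "p \<noteq> 0" using p(1) unfolding hyp_def by auto
  have "dim (mink_orth {p}) + dim (span S) \<le> dim (mink_orth {p} \<inter> span S) + 5"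
    by (rule dim_Int_ge[OF subspace_mink_orth S(1)])
  then have "1 \<le> dim (mink_orth {p} \<inter> span S)"
    using dim_mink_orth_singleton[OF \<open>p \<noteq> 0\<close>] S(2) assms(2) by linarith
  then obtain u where u: "u \<in> mink_orth {p} \<inter> span S" "u \<noteq> 0" by (rule dim_ge_1_obtain_nonzero)
  then have "mink p u = 0" by (simp add: mink_commute)
  then have "span (span S \<inter> ideal_sphere) = span S"
    using span_ideal_sphere_Int[OF S(1) p(2) _ _ u(2)] hyp_mink_self[OF p(1)] u(1) by simp
  then show ?thesis using bd_tg_subspace[OF assms(1)] by simp
qed

lemma hyperplane_normal:
  assumes "hhyperplane H"
  shows "normal_of H \<noteq> 0" "mink (normal_of H) (normal_of H) > 0"
    "mink_orth {normal_of H} = span H"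
proof -
  note H = tg_subspaceD[OF assms]
  have "dim (mink_orth (span H)) = 1" using dim_mink_orth[OF H(1)] H(2) by simp
  then obtain m where "m \<in> mink_orth (span H)" "m \<noteq> 0"
    using dim_ge_1_obtain_nonzero[of "mink_orth (span H)"] by auto
  then have "\<exists>n. n \<noteq> 0 \<and> (\<forall>v\<in>span H. mink n v = 0)" unfolding mink_orth_def by auto
  then have "normal_of H \<noteq> 0 \<and> (\<forall>v\<in>span H. mink (normal_of H) v = 0)"
    unfolding normal_of_def by (rule someI_ex)
  then have n: "normal_of H \<noteq> 0" "normal_of H \<in> mink_orth (span H)"
    unfolding mink_orth_def by auto
  then show "normal_of H \<noteq> 0" by simp
  obtain p where p: "p \<in> hyp" "p \<in> span H" using H(3,4) by blast
  then have "mink p (normal_of H) = 0" using n(2) by (auto simp: mink_orth_def mink_commute)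
  then show "mink (normal_of H) (normal_of H) > 0"
    using mink_orth_timelike_imp_spacelike[of p] hyp_mink_self[OF p(1)] n(1) by simp
  have "span {normal_of H} = mink_orth (span H)"
    using subspace_dim_equal[OF subspace_span subspace_mink_orth, of "{normal_of H}" "span H"]
      n \<open>dim (mink_orth (span H)) = 1\<close> by (simp add: span_minimal subspace_mink_orth)
  then show "mink_orth {normal_of H} = span H"
    by (metis mink_orth_span mink_orth_mink_orth[OF H(1)])
qed

lemma mem_hyperplane_iff:
  assumes "hhyperplane H"
  shows "x \<in> H \<longleftrightarrow> x \<in> hyp \<and> mink x (normal_of H) = 0"
proof -
  have "H = hyp \<inter> mink_orth {normal_of H}"
    using tg_subspaceD(3)[OF assms] hyperplane_normal(3)[OF assms] by simp
  then have "x \<in> H \<longleftrightarrow> x \<in> hyp \<inter> mink_orth {normal_of H}" by (rule eqset_imp_iff)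
  then show ?thesis by simp
qed

lemma hyperplane_eq_if_normals_parallel:
  assumes "hhyperplane H1" "hhyperplane H2" "normal_of H2 = k *\<^sub>R normal_of H1"
  shows "H1 = H2"
proof -
  have "k \<noteq> 0" using hyperplane_normal(1)[OF assms(2)] assms(3) by auto
  then have "mink x (normal_of H2) = 0 \<longleftrightarrow> mink x (normal_of H1) = 0" for x
    using assms(3) by (simp add: mink_scaleR_right)
  then have "mink_orth {normal_of H1} = mink_orth {normal_of H2}" by auto
  then have "span H1 = span H2" using hyperplane_normal(3) assms(1,2) by metis
  then show ?thesis using tg_subspaceD(3) assms(1,2) by metis
qed

lemma twisting_plane_eq_Int:
  assumes H: "hhyperplane H1" "hhyperplane H2" "H1 \<noteq> H2"
    and \<rho>: "\<forall>x\<in>hyp. \<rho> x = hrefl H1 (hrefl H2 x)"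
  shows "twisting_plane \<rho> = H1 \<inter> H2"
proof (intro set_eqI iffI)
  fix x assume x: "x \<in> H1 \<inter> H2"
  then have "hrefl H1 x = x" "hrefl H2 x = x"
    using mem_hyperplane_iff[OF H(1)] mem_hyperplane_iff[OF H(2)] by (auto simp: hrefl_def)
  then show "x \<in> twisting_plane \<rho>"
    using x \<rho> mem_hyperplane_iff[OF H(1)] unfolding twisting_plane_def by auto
next
  fix x assume "x \<in> twisting_plane \<rho>"
  then have x: "x \<in> hyp" "hrefl H1 (hrefl H2 x) = x" unfolding twisting_plane_def using \<rho> by auto
  define n1 n2 where "n1 = normal_of H1" and "n2 = normal_of H2"
  define c2 where "c2 = 2 * mink x n2 / mink n2 n2"
  define y where "y = x - c2 *\<^sub>R n2"
  define c1 where "c1 = 2 * mink y n1 / mink n1 n1"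
  have "y - c1 *\<^sub>R n1 = x"
    using x(2) unfolding hrefl_def Let_def c1_def y_def c2_def n1_def n2_def by simp
  then have sum0: "c2 *\<^sub>R n2 + c1 *\<^sub>R n1 = 0" unfolding y_def by (simp add: algebra_simps)
  have "c2 = 0"
  proof (rule ccontr)
    assume "c2 \<noteq> 0"
    have "n2 = (1 / c2) *\<^sub>R (c2 *\<^sub>R n2)" using \<open>c2 \<noteq> 0\<close> by simp
    also have "\<dots> = (- c1 / c2) *\<^sub>R n1"
      using sum0 by (simp add: eq_neg_iff_add_eq_0[symmetric])
    finally have "normal_of H2 = (- c1 / c2) *\<^sub>R normal_of H1" unfolding n1_def n2_def .
    then show False using hyperplane_eq_if_normals_parallel[OF H(1,2)] H(3) by blast
  qed
  then have "c1 = 0" using sum0 hyperplane_normal(1)[OF H(1)] n1_def by simp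
  have "mink x n2 = 0" using \<open>c2 = 0\<close> hyperplane_normal(2)[OF H(2)] n2_def c2_def by simp
  moreover have "mink x n1 = 0"
    using \<open>c1 = 0\<close> \<open>c2 = 0\<close> hyperplane_normal(2)[OF H(1)] n1_def c1_def y_def by simp
  ultimately show "x \<in> H1 \<inter> H2"
    using x(1) mem_hyperplane_iff[OF H(1)] mem_hyperplane_iff[OF H(2)] n1_def n2_def by blast
qed

lemma hplane_twisting_plane:
  assumes "type_I_elliptic \<rho>"
  shows "hplane (twisting_plane \<rho>)"
  using assms twisting_plane_eq_Int unfolding type_I_elliptic_def by metis

section \<open>Planes orthogonal through a line\<close>

lemma subspace_sums_mink_orth:
  fixes L W :: "(real^5) set"
  assumes "subspace L" "subspace W" "L \<subseteq> W" "p \<in> L" "mink p p < 0"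
  shows "{x + y |x y. x \<in> L \<and> y \<in> W \<inter> mink_orth L} = W"
proof -
  have M: "subspace (W \<inter> mink_orth L)" by (rule subspace_inter[OF assms(2) subspace_mink_orth])
  have "dim W + dim (mink_orth L) \<le> dim (W \<inter> mink_orth L) + 5"
    by (rule dim_Int_ge[OF assms(2) subspace_mink_orth])
  then have "dim W \<le> dim L + dim (W \<inter> mink_orth L)" using dim_mink_orth[OF assms(1)] by linarith
  moreover have "dim (L \<inter> (W \<inter> mink_orth L)) = 0"
    using mink_orth_Int_self_subset[OF assms(4,5)] by (simp add: dim_eq_0) blast
  ultimately have "dim W \<le> dim {x + y |x y. x \<in> L \<and> y \<in> W \<inter> mink_orth L}"
    using dim_sums_Int[OF assms(1) M] by linarith
  moreover have "{x + y |x y. x \<in> L \<and> y \<in> W \<inter> mink_orth L} \<subseteq> W"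
    using assms(2,3) by (auto intro: subspace_add)
  ultimately show ?thesis
    using subspace_dim_equal[OF subspace_sums[OF assms(1) M] assms(2)] by simp
qed

text \<open>Q decomposes as the line Q \<inter> P plus its normal directions inside Q; the first summand is
  orthogonal to n by choice of n, the second by orthogonality of Q and P along the line.\<close>
lemma orth_through_line_subset_mink_orth:
  assumes otl: "orth_through_line Q P"
    and n: "n \<in> span P" "n \<in> mink_orth (span (Q \<inter> P))"
  shows "span Q \<subseteq> mink_orth {n}"
proof -
  define L where "L = span (Q \<inter> P)"
  have hl: "hline (Q \<inter> P)" using otl unfolding orth_through_line_def by blast
  have "Q \<inter> P = hyp \<inter> L" unfolding L_def by (rule tg_subspaceD(3)[OF hl])
  then obtain p where "p \<in> hyp" "p \<in> L" using tg_subspaceD(4)[OF hl] by blast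
  have "L \<subseteq> span Q" unfolding L_def by (rule span_mono) blast
  have "x + y \<in> mink_orth {n}" if "x \<in> L" "y \<in> span Q \<inter> mink_orth L" for x y
  proof -
    have "mink x n = 0" using n(2) \<open>x \<in> L\<close> unfolding L_def by (auto simp: mink_orth_def mink_commute)
    moreover have "mink y n = 0"
      using otl that(2) n unfolding orth_through_line_def L_def mink_orth_def by auto
    ultimately show ?thesis by (simp add: mink_simps)
  qed
  then show ?thesis
    using subspace_sums_mink_orth[OF _ subspace_span \<open>L \<subseteq> span Q\<close> \<open>p \<in> L\<close>]
      hyp_mink_self[OF \<open>p \<in> hyp\<close>] unfolding L_def by force
qed

lemma obtain_spacelike_normal:
  assumes "subspace V" "subspace L" "L \<subseteq> V" "dim V = dim L + 1" "p \<in> L" "mink p p < 0"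
  obtains n where "n \<in> V" "n \<in> mink_orth L" "mink n n > 0"
proof -
  have "dim V + dim (mink_orth L) \<le> dim (V \<inter> mink_orth L) + 5"
    by (rule dim_Int_ge[OF assms(1) subspace_mink_orth])
  then have "1 \<le> dim (V \<inter> mink_orth L)" using dim_mink_orth[OF assms(2)] assms(4) by linarith
  then obtain n where n: "n \<in> V \<inter> mink_orth L" "n \<noteq> 0" by (rule dim_ge_1_obtain_nonzero)
  then have "mink p n = 0" using assms(5) by (auto simp: mink_orth_def mink_commute)
  then have "mink n n > 0" using mink_orth_timelike_imp_spacelike[OF assms(6)] n(2) by blast
  then show thesis using that n(1) by blast
qed

lemma dim_Int_mink_orth_singleton:
  assumes "subspace V" "n \<in> V" "mink n n \<noteq> 0"
  shows "dim (V \<inter> mink_orth {n}) + 1 = dim V"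
proof -
  have "n \<noteq> 0" using assms(3) by auto
  have "dim V + dim (mink_orth {n}) \<le> dim (V \<inter> mink_orth {n}) + 5"
    by (rule dim_Int_ge[OF assms(1) subspace_mink_orth])
  moreover have "dim (V \<inter> mink_orth {n}) < dim V"
    using dim_Int_less[OF assms(1) subspace_mink_orth assms(2)] assms(3) by simp
  ultimately show ?thesis using dim_mink_orth_singleton[OF \<open>n \<noteq> 0\<close>] by linarith
qed

lemma hyp_Int_mink_orth_singleton_nonempty:
  assumes "subspace V" "p \<in> hyp \<inter> V" "n \<in> V" "mink n n > 0"
  obtains q where "q \<in> hyp \<inter> (V \<inter> mink_orth {n})"
proof -
  define p' where "p' = p - (mink p n / mink n n) *\<^sub>R n"
  have "mink p p < 0" using assms(2) hyp_mink_self by simp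
  then have p': "p' \<in> V \<inter> mink_orth {n}" "mink p' p' < 0"
    using mink_orth_projection[of n p] timelike_projection[of p n] assms
    unfolding p'_def by (auto simp: subspace_diff subspace_scale)
  obtain c where "c *\<^sub>R p' \<in> hyp" using timelike_scaleR_in_hyp[OF p'(2)] .
  moreover have "c *\<^sub>R p' \<in> V \<inter> mink_orth {n}"
    using p'(1) assms(1) by (simp add: subspace_scale mink_simps)
  ultimately show thesis using that by blast
qed

lemma orth_hyperplane_plane_hyp_Int_mink_orth:
  assumes P: "hplane P" and n: "n \<in> span P" "n \<noteq> 0" and p: "p \<in> hyp \<inter> mink_orth {n}"
  shows "orth_hyperplane_plane (hyp \<inter> mink_orth {n}) P"
  unfolding orth_hyperplane_plane_def
proof (intro conjI allI impI P)
  show "hhyperplane (hyp \<inter> mink_orth {n})"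
    by (rule tg_subspaceI[OF subspace_mink_orth _ p]) (simp add: dim_mink_orth_singleton n(2))
  fix m assume "\<forall>v\<in>span (hyp \<inter> mink_orth {n}). mink m v = 0"
  then have "m \<in> mink_orth (mink_orth {n})"
    unfolding span_hyp_Int[OF subspace_mink_orth p] mink_orth_def[of "mink_orth {n}"] by blast
  moreover have "span {n} \<subseteq> span P" using n(1) by (simp add: span_minimal)
  ultimately show "m \<in> span P" unfolding mink_orth_mink_orth_singleton by blast
qed

lemma orth_through_line_imp_pencils:
  assumes P: "hplane P" and Q: "hplane Q" and otl: "orth_through_line Q P"
  obtains s t where "hhyperplane s" "P \<subseteq> s" "orth_hyperplane_plane t P" "bd Q = bd s \<inter> bd t"
proof -
  define VP VQ where "VP = span P" and "VQ = span Q"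
  note SP = tg_subspaceD[OF P, folded VP_def] and SQ = tg_subspaceD[OF Q, folded VQ_def]
  have hl: "hline (Q \<inter> P)" using otl unfolding orth_through_line_def by blast
  have QP: "Q \<inter> P = hyp \<inter> (VQ \<inter> VP)" using SP(3) SQ(3) by blast
  then obtain p where p: "p \<in> hyp \<inter> (VQ \<inter> VP)" using tg_subspaceD(4)[OF hl] by blast
  have L: "span (Q \<inter> P) = VQ \<inter> VP"
    unfolding QP by (rule span_hyp_Int[OF subspace_inter[OF SQ(1) SP(1)] p])
  then have dL: "dim (VQ \<inter> VP) = 2" using tg_subspaceD(2)[OF hl] by simp
  have "mink p p < 0" using p hyp_mink_self by simp
  obtain n where n: "n \<in> VP" "n \<in> mink_orth (VQ \<inter> VP)" "mink n n > 0"
    by (rule obtain_spacelike_normal[OF SP(1) subspace_inter[OF SQ(1) SP(1)] _ _ _ \<open>mink p p < 0\<close>])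
      (use p dL SP(2) in auto)
  have QT: "VQ \<subseteq> mink_orth {n}"
    using orth_through_line_subset_mink_orth[OF otl] n L unfolding VQ_def VP_def by simp
  define VS where "VS = {x + y |x y. x \<in> VQ \<and> y \<in> VP}"
  have S: "subspace VS" unfolding VS_def by (rule subspace_sums[OF SQ(1) SP(1)])
  have "dim VS = 4" using dim_sums_Int[OF SQ(1) SP(1)] SP(2) SQ(2) dL unfolding VS_def by simp
  have "VQ \<subseteq> VS" "VP \<subseteq> VS" unfolding VS_def using subspace_0 SQ(1) SP(1) by force+
  define s t where "s = hyp \<inter> VS" and "t = hyp \<inter> mink_orth {n}"
  have ps: "p \<in> hyp \<inter> VS" and pt: "p \<in> hyp \<inter> mink_orth {n}" using p \<open>VQ \<subseteq> VS\<close> QT by auto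
  have "hhyperplane s" unfolding s_def by (rule tg_subspaceI[OF S _ ps]) (simp add: \<open>dim VS = 4\<close>)
  moreover have "P \<subseteq> s" unfolding s_def using SP(3) \<open>VP \<subseteq> VS\<close> by blast
  moreover have "orth_hyperplane_plane t P"
  proof -
    have "n \<noteq> 0" using n(3) by auto
    then show ?thesis
      unfolding t_def using orth_hyperplane_plane_hyp_Int_mink_orth[OF P _ _ pt] n(1) VP_def by blast
  qed
  moreover have "VQ = VS \<inter> mink_orth {n}"
    by (rule subspace_eq_Int_if_codim_one[OF SQ(1) S subspace_mink_orth, where x=n])
      (use \<open>VQ \<subseteq> VS\<close> QT \<open>dim VS = 4\<close> SQ(2) \<open>VP \<subseteq> VS\<close> n in auto)
  then have "bd Q = bd s \<inter> bd t"
    using bd_tg_subspace[OF Q] bd_hyp_Int[OF S ps] bd_hyp_Int[OF subspace_mink_orth pt]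
    unfolding s_def t_def VQ_def by auto
  ultimately show thesis using that by blast
qed

lemma orth_to_section_imp_parallel:
  assumes "subspace V" "n \<in> V" "mink n n \<noteq> 0" "p \<in> V \<inter> mink_orth {n}" "mink p p < 0"
    and "v \<in> V" "\<forall>w \<in> V \<inter> mink_orth {n}. mink v w = 0"
  shows "v = (mink v n / mink n n) *\<^sub>R n"
proof -
  define v' where "v' = v - (mink v n / mink n n) *\<^sub>R n"
  have "v' \<in> V \<inter> mink_orth {n}"
    using assms(1-3,6) mink_orth_projection unfolding v'_def by (simp add: subspace_diff subspace_scale)
  moreover have "mink v' w = 0" if "w \<in> V \<inter> mink_orth {n}" for w
  proof -
    have "mink n w = 0" using that mink_commute[of n w] by simp
    then show ?thesis using assms(7) that unfolding v'_def by (simp add: mink_simps)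
  qed
  then have "v' \<in> mink_orth (V \<inter> mink_orth {n})" unfolding mink_orth_def by blast
  ultimately have "v' = 0" using mink_orth_Int_self_subset[OF assms(4,5)] by blast
  then show ?thesis unfolding v'_def by simp
qed

lemma pencils_imp_orth_through_line:
  assumes P: "hplane P" and Q: "hplane Q" and s: "hhyperplane s" "P \<subseteq> s"
    and t: "orth_hyperplane_plane t P" and bdQ: "bd Q = bd s \<inter> bd t"
  shows "orth_through_line Q P"
proof -
  define VP VQ VS n where "VP = span P" and "VQ = span Q" and "VS = span s"
    and "n = normal_of t"
  note SP = tg_subspaceD[OF P, folded VP_def] and SQ = tg_subspaceD[OF Q, folded VQ_def]
    and SS = tg_subspaceD[OF s(1), folded VS_def]
  have ht: "hhyperplane t" using t unfolding orth_hyperplane_plane_def by blast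
  note N = hyperplane_normal[OF ht, folded n_def]
  have "\<forall>v\<in>span t. mink n v = 0" using N(3) by (metis mem_mink_orth_singleton mink_commute)
  then have "n \<in> VP" using t unfolding orth_hyperplane_plane_def VP_def by blast
  have "VP \<subseteq> VS" unfolding VP_def VS_def using s(2) by (rule span_mono)
  have "bd Q = (VS \<inter> ideal_sphere) \<inter> (mink_orth {n} \<inter> ideal_sphere)"
    unfolding bdQ bd_tg_subspace[OF s(1)] bd_tg_subspace[OF ht] N(3) VS_def ..
  then have "span (bd Q) \<subseteq> VS \<inter> mink_orth {n}"
    by (intro span_minimal[OF _ subspace_inter[OF SS(1) subspace_mink_orth]]) blast
  then have "VQ \<subseteq> VS \<inter> mink_orth {n}" using span_bd_tg_subspace[OF Q] unfolding VQ_def by simp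
  then have VQ: "VQ = VS \<inter> mink_orth {n}"
    by (rule subspace_eq_Int_if_codim_one[OF SQ(1) SS(1) subspace_mink_orth, where x=n])
      (use SS(2) SQ(2) \<open>n \<in> VP\<close> \<open>VP \<subseteq> VS\<close> N(2) in auto)
  define L where "L = VP \<inter> mink_orth {n}"
  have subL: "subspace L" unfolding L_def by (rule subspace_inter[OF SP(1) subspace_mink_orth])
  have QP: "Q \<inter> P = hyp \<inter> L" using SQ(3) SP(3) VQ \<open>VP \<subseteq> VS\<close> unfolding L_def by blast
  obtain p where "p \<in> hyp \<inter> VP" using SP(3,4) by blast
  then obtain q where q: "q \<in> hyp \<inter> L"
    unfolding L_def using hyp_Int_mink_orth_singleton_nonempty[OF SP(1) _ \<open>n \<in> VP\<close> N(2)] by blast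
  have "dim L = 2"
    using dim_Int_mink_orth_singleton[OF SP(1) \<open>n \<in> VP\<close>] N(2) SP(2) unfolding L_def by simp
  then have hl: "hline (Q \<inter> P)" unfolding QP by (intro tg_subspaceI[OF subL _ q]) simp
  have spanL: "span (Q \<inter> P) = L" unfolding QP by (rule span_hyp_Int[OF subL q])
  show ?thesis
    unfolding orth_through_line_def
  proof (intro conjI hl ballI impI)
    fix u v assume "u \<in> span Q" "v \<in> span P" "\<forall>w\<in>span (Q \<inter> P). mink v w = 0"
    moreover have "mink q q < 0" using q hyp_mink_self by simp
    ultimately have "mink u n = 0" "v = (mink v n / mink n n) *\<^sub>R n"
      using VQ orth_to_section_imp_parallel[OF SP(1) \<open>n \<in> VP\<close> _ _ \<open>mink q q < 0\<close>] N(2) spanL q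
      unfolding VQ_def VP_def L_def by auto
    then show "mink u v = 0" by (metis mink_scaleR_right mult_zero_right)
  qed
qed

theorem theorem5p6:
  fixes \<rho> :: "real^5 \<Rightarrow> real^5" and Q :: "(real^5) set"
  assumes "type_I_elliptic \<rho>"
    and "hplane Q"
  shows "orth_through_line Q (twisting_plane \<rho>) \<longleftrightarrow> bd Q \<in> half_turn_bank \<rho>"
proof -
  have P: "hplane (twisting_plane \<rho>)" using hplane_twisting_plane[OF assms(1)] .
  have "bd Q \<in> half_turn_bank \<rho> \<longleftrightarrow> (\<exists>s t. hhyperplane s \<and> twisting_plane \<rho> \<subseteq> s \<and>
      orth_hyperplane_plane t (twisting_plane \<rho>) \<and> bd Q = bd s \<inter> bd t)"
    unfolding half_turn_bank_def permuted_pencil_def invariant_pencil_def by blast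
  also have "\<dots> \<longleftrightarrow> orth_through_line Q (twisting_plane \<rho>)"
    by (metis orth_through_line_imp_pencils[OF P assms(2)] pencils_imp_orth_through_line[OF P assms(2)])
  finally show ?thesis by blast
qed

end
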